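(* Let $(x_0,y_0)$ be a pair of integers satisfying $S_{2,1}$. Let $y_{-1}$ and $x_1$ be the real numbers defined by $y_{-1}y_0=x_0^3+x_0+1$ and $x_0x_1=y_0^3+y_0^2+1$. Then $y_{-1},x_1$ are integers, $(y_{-1},x_0)$ satisfies $S_{1,1}$, and $(y_0,x_1)$ satisfies $S_{2,2}$.
   Context: For $\lambda_a,\lambda_b\in\{1,2\}$, a pair of integers $(x,y)$ satisfies the system $S_{\lambda_a,\lambda_b}$ if $x\mid y^3+y^{\lambda_a}+1$ and $y\mid x^3+x^{\lambda_b}+1$. So $S_{1,1}$: $x\mid y^3+y+1,\ y\mid x^3+x+1$; $S_{2,1}$: $x\mid y^3+y^2+1,\ y\mid x^3+x+1$; $S_{2,2}$: $x\mid y^3+y^2+1,\ y\mid x^3+x^2+1$. *)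

theory Defs
  imports Complex_Main
begin

definition satisfies_S :: "nat \<Rightarrow> nat \<Rightarrow> int \<Rightarrow> int \<Rightarrow> bool" where
  "satisfies_S la lb x y \<longleftrightarrow> x dvd (y^3 + y^la + 1) \<and> y dvd (x^3 + x^lb + 1)"

end

theory Submission
  imports Defs "HOL-Number_Theory.Cong"
begin

text \<open>If \<open>a y = N\<close> with \<open>N = x^3 + x^\<lambda> + 1 \<equiv> 1 (mod x)\<close>, then
  \<open>y^3 (a^3 + a^\<lambda> + 1) = N^3 + N^\<lambda> y^(3-\<lambda>) + y^3 \<equiv> y^3 + y^(3-\<lambda>) + 1 (mod x)\<close>,
  and \<open>y\<close> is a unit modulo \<open>x\<close>. So \<open>x \<bar> y^3 + y^(3-\<lambda>) + 1\<close> gives \<open>x \<bar> a^3 + a^\<lambda> + 1\<close>: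
  the cofactor \<open>y\<^sub>-\<^sub>1\<close> inherits the condition with \<open>\<lambda> = 1\<close> and \<open>x\<^sub>1\<close> with \<open>\<lambda> = 2\<close>.
  Since \<open>t^3 + t^\<lambda> + 1\<close> has no integer root, \<open>x\<^sub>0, y\<^sub>0 \<noteq> 0\<close>, so the real cofactors are the integer ones.\<close>

lemma dvd_power_sum_of_cofactor:
  fixes x y a N :: int
  assumes "k \<le> m" and "a * y = N" and N_cong: "[N = 1] (mod x)"
    and x_dvd: "x dvd y^m + y^(m - k) + 1"
  shows "x dvd a^m + a^k + 1"
proof -
  have y_powers: "y^k * y^(m - k) = y^m"
    using \<open>k \<le> m\<close> by (simp flip: power_add)
  have expand: "y^m * (a^m + a^k + 1) = N^m + N^k * y^(m - k) + y^m"
    using \<open>a * y = N\<close> y_powers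
    by (auto simp: power_mult_distrib algebra_simps simp flip: mult.assoc)
  have "[N^m + N^k * y^(m - k) + y^m = 1 + y^(m - k) + y^m] (mod x)"
    using N_cong by (metis cong_add cong_mult cong_pow cong_refl mult_1 power_one)
  moreover have "[1 + y^(m - k) + y^m = 0] (mod x)"
    using x_dvd by (simp add: cong_0_iff ac_simps)
  ultimately have "x dvd y^m * (a^m + a^k + 1)"
    unfolding expand by (meson cong_0_iff cong_trans)
  moreover have "coprime x y"
    using N_cong \<open>a * y = N\<close> coprime_iff_invertible_int
    by (metis coprime_commute mult.commute)
  ultimately show ?thesis
    by (simp add: coprime_dvd_mult_right_iff)
qed

lemma power_add_power_add_one_neq_zero:
  fixes x :: int
  assumes "m > 0" and "k > 0"
  shows "x^m + x^k + 1 \<noteq> 0"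
proof
  assume zero: "x^m + x^k + 1 = 0"
  then have "x dvd 1"
    using assms by (metis dvd_add_right_iff dvd_0_right dvd_power dvd_add)
  then have "x = 1 \<or> x = -1"
    by (auto simp: zdvd1_eq abs_if split: if_splits)
  with zero show False
    by (cases "even m"; cases "even k") auto
qed

theorem corollary3:
  fixes x0 y0 :: int and ym1 x1 :: real
  assumes "satisfies_S 2 1 x0 y0"
    and "ym1 * of_int y0 = of_int (x0^3 + x0 + 1)"
    and "of_int x0 * x1 = of_int (y0^3 + y0^2 + 1)"
  shows "\<exists>a b :: int. ym1 = of_int a \<and> x1 = of_int b \<and>
           satisfies_S 1 1 a x0 \<and> satisfies_S 2 2 y0 b"
proof -
  have x0_dvd: "x0 dvd y0^3 + y0^2 + 1" and y0_dvd: "y0 dvd x0^3 + x0^1 + 1"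
    using assms(1) unfolding satisfies_S_def by auto
  obtain a where a: "a * y0 = x0^3 + x0 + 1"
    using y0_dvd by (metis dvdE mult.commute power_one_right)
  obtain b where b: "b * x0 = y0^3 + y0^2 + 1"
    using x0_dvd by (metis dvdE mult.commute)
  have "y0 \<noteq> 0" and "x0 \<noteq> 0"
    using a b power_add_power_add_one_neq_zero[of 3 1 x0] power_add_power_add_one_neq_zero[of 3 2 y0]
    by auto
  have "ym1 = of_int a"
    using assms(2) \<open>y0 \<noteq> 0\<close> by (simp flip: a)
  moreover have "x1 = of_int b"
    using assms(3) \<open>x0 \<noteq> 0\<close> by (simp flip: b)
  moreover have "satisfies_S 1 1 a x0"
    using dvd_power_sum_of_cofactor[of 1 3 a y0 "x0^3 + x0 + 1" x0] a x0_dvd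
    by (simp add: satisfies_S_def cong_iff_dvd_diff power3_eq_cube) (metis dvd_triv_left)
  moreover have "satisfies_S 2 2 y0 b"
    using dvd_power_sum_of_cofactor[of 2 3 b x0 "y0^3 + y0^2 + 1" y0] b y0_dvd
    by (simp add: satisfies_S_def cong_iff_dvd_diff power3_eq_cube power2_eq_square) (metis dvd_triv_left)
  ultimately show ?thesis by blast
qed

end
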